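(* Let $\{a_n\}_{n\in\mathbb{N}}$ be a sequence in $(0,\infty)$ such that $a=\sum_{n=1}^\infty a_n$ converges. Then the series $A(k):=\sum_{n=1}^\infty \log(1+a_n^2k^2)$ converges uniformly on compact subsets of $\mathbb{R}$ to a continuous function $A:\mathbb{R}\to\mathbb{R}$ such that: (i) $0\le A(k)\le a|k|$ for all $k\in\mathbb{R}$; (ii) $A$ is even and strictly increasing on $k\ge0$; (iii) $\lim_{k\to\infty}A(k)=\infty$ and $\lim_{k\to\infty}\frac{A(k)}{|k|}=\lim_{k\to0}\frac{A(k)}{|k|}=0$; (iv) $\int_0^\infty \frac{A(k)}{k^2}\,\mathrm{d}k=\pi a$; (v) for the function $g$ constructed from $\{a_n\}$ as below, and for $\alpha=\frac1{20}$, $\beta=\frac{7}{40}$, we have $e^{-A(\sqrt\beta k)}\le \hat g(k)\le e^{-A(\sqrt\alpha k)}$ for all $k\in\mathbb{R}$.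
   Context: Let $\eta(x)=\frac32(1-|x|)^2$ for $|x|\le1$ and $\eta(x)=0$ otherwise. Given the sequence $\{a_n\}$, set $\eta_n(x)=\frac{1}{a_n}\eta(x/a_n)$, $g_1=\eta_1$, $g_{n+1}=g_n*\eta_{n+1}$; the $g_n$ converge uniformly to a smooth compactly supported function $g$. The Fourier transform is $\hat f(k)=\int e^{-ikx}f(x)\,\mathrm{d}x$. *)

theory Defs
  imports "HOL-Analysis.Analysis"
begin

text \<open>The sequence (a_1, a_2, ...) of the paper is represented 0-indexed as a 0, a 1, ...\<close>

definition A_partial :: "(nat \<Rightarrow> real) \<Rightarrow> nat \<Rightarrow> real \<Rightarrow> real" where
  "A_partial a N k = (\<Sum>n<N. ln (1 + (a n)\<^sup>2 * k\<^sup>2))"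

definition A_fun :: "(nat \<Rightarrow> real) \<Rightarrow> real \<Rightarrow> real" where
  "A_fun a k = (\<Sum>n. ln (1 + (a n)\<^sup>2 * k\<^sup>2))"

definition eta :: "real \<Rightarrow> real" where
  "eta x = (if \<bar>x\<bar> \<le> 1 then 3/2 * (1 - \<bar>x\<bar>)\<^sup>2 else 0)"

definition eta_scaled :: "real \<Rightarrow> real \<Rightarrow> real" where
  "eta_scaled c x = (1 / c) * eta (x / c)"

definition conv :: "(real \<Rightarrow> real) \<Rightarrow> (real \<Rightarrow> real) \<Rightarrow> real \<Rightarrow> real" where
  "conv f h x = integral UNIV (\<lambda>y. f y * h (x - y))"

fun gseq :: "(nat \<Rightarrow> real) \<Rightarrow> nat \<Rightarrow> real \<Rightarrow> real" where
  "gseq a 0 = eta_scaled (a 0)"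
| "gseq a (Suc n) = conv (gseq a n) (eta_scaled (a (Suc n)))"

text \<open>The limit function g (the g_n converge uniformly, in particular pointwise).\<close>
definition g_lim :: "(nat \<Rightarrow> real) \<Rightarrow> real \<Rightarrow> real" where
  "g_lim a x = lim (\<lambda>n. gseq a n x)"

definition fourier :: "(real \<Rightarrow> real) \<Rightarrow> real \<Rightarrow> complex" where
  "fourier f k = integral UNIV (\<lambda>x. exp (- \<i> * complex_of_real (k * x)) * complex_of_real (f x))"

end

theory Submission
  imports Defs "HOL-Real_Asymp.Real_Asymp"
begin

text \<open>
  Every term of A satisfies 0 <= log(1 + a_n^2 k^2) <= min(a_n |k|, a_n^2 k^2). The first bound gives
  uniform convergence, (i) and, by Tannery's theorem, A(k)/|k| -> 0 at infinity; the second gives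
  A(k)/|k| -> 0 at 0. Integrating termwise reduces (iv) to the identity
  int_0^oo log(1 + c^2 k^2)/k^2 dk = pi c, read off from the antiderivative
  2c arctan(ck) - log(1 + c^2 k^2)/k.

  For (v): the bump eta_c rescaled to [-c, c] has Fourier transform etahat(ck), where
  etahat(s) = 6(s - sin s)/s^3, and convolution becomes multiplication, so the transform of g_n is
  the product of the etahat(a_i k), i <= n. Elementary estimates of sin give
  1/(1 + 7s^2/40) <= etahat(s) <= 1/(1 + s^2/20), while exp(-A(sqrt c k)) is the product of the
  1/(1 + c a_i^2 k^2); so the bounds hold for the partial products and pass to the limit. The g_n
  converge because convolving an L-Lipschitz function with a probability density supported in
  [-a_(n+1), a_(n+1)] moves it by at most L a_(n+1), and the a_n are summable.
\<close>

section \<open>The series A\<close>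

lemma ln_one_plus_square_le_abs:
  fixes x :: real
  shows "ln (1 + x\<^sup>2) \<le> \<bar>x\<bar>"
proof -
  have "(\<lambda>s. s - ln (1 + s\<^sup>2)) 0 \<le> (\<lambda>s. s - ln (1 + s\<^sup>2)) \<bar>x\<bar>"
  proof (rule DERIV_nonneg_imp_nondecreasing[of 0 "\<bar>x\<bar>"])
    fix y :: real
    have denom: "0 < 1 + y\<^sup>2"
      by (simp add: add_pos_nonneg)
    have "2 * y \<le> 1 + y\<^sup>2"
      using sum_squares_ge_zero[of "y - 1" 0] by (simp add: power2_eq_square algebra_simps)
    then have "0 \<le> 1 - 2 * y / (1 + y\<^sup>2)"
      using denom by (simp add: field_simps)
    moreover have "DERIV (\<lambda>s. s - ln (1 + s\<^sup>2)) y :> 1 - 2 * y / (1 + y\<^sup>2)"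
      using denom by (auto intro!: derivative_eq_intros simp: power2_eq_square)
    ultimately show "\<exists>d. DERIV (\<lambda>s. s - ln (1 + s\<^sup>2)) y :> d \<and> 0 \<le> d"
      by blast
  qed simp
  then show ?thesis
    by simp
qed

lemma A_fun_minus: "A_fun a (- k) = A_fun a k"
  by (simp add: A_fun_def)

locale positive_summable =
  fixes a :: "nat \<Rightarrow> real"
  assumes pos: "\<And>n. a n > 0"
    and summable: "summable a"
begin

definition A_term :: "nat \<Rightarrow> real \<Rightarrow> real" where
  "A_term n k = ln (1 + (a n)\<^sup>2 * k\<^sup>2)"

lemma A_fun_eq: "A_fun a k = (\<Sum>n. A_term n k)"
  by (simp add: A_fun_def A_term_def)

lemma A_partial_eq: "A_partial a N k = (\<Sum>n<N. A_term n k)"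
  by (simp add: A_partial_def A_term_def)

lemma A_term_nonneg: "0 \<le> A_term n k"
  by (simp add: A_term_def)

lemma A_term_le_abs: "A_term n k \<le> a n * \<bar>k\<bar>"
  using ln_one_plus_square_le_abs[of "a n * k"] pos[of n]
  by (simp add: A_term_def power_mult_distrib abs_mult)

lemma A_term_le_square: "A_term n k \<le> (a n)\<^sup>2 * k\<^sup>2"
  unfolding A_term_def by (rule ln_add_one_self_le_self) simp

lemma A_term_strict_mono: "0 \<le> x \<Longrightarrow> x < y \<Longrightarrow> A_term n x < A_term n y"
  using pos[of n] by (simp add: A_term_def add_pos_nonneg power_strict_mono)

lemma summable_A_term: "summable (\<lambda>n. A_term n k)"
  by (rule summable_comparison_test[where g="\<lambda>n. a n * \<bar>k\<bar>"])
    (use A_term_le_abs A_term_nonneg summable_mult2[OF summable] in auto)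

lemma A_partial_tendsto: "(\<lambda>N. A_partial a N k) \<longlonglongrightarrow> A_fun a k"
  unfolding A_fun_eq A_partial_eq using summable_A_term by (rule summable_LIMSEQ)

lemma uniform_limit_A_partial:
  assumes "compact K"
  shows "uniform_limit K (A_partial a) (A_fun a) sequentially"
proof -
  obtain B where B: "\<And>x. x \<in> K \<Longrightarrow> \<bar>x\<bar> \<le> B"
    using assms by (metis bounded_iff compact_imp_bounded real_norm_def)
  have "uniform_limit K (\<lambda>N x. \<Sum>n<N. A_term n x) (\<lambda>x. \<Sum>n. A_term n x) sequentially"
  proof (rule Weierstrass_m_test)
    show "norm (A_term n x) \<le> a n * B" if "x \<in> K" for n x
    proof -
      have "A_term n x \<le> a n * \<bar>x\<bar>"
        by (rule A_term_le_abs)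
      also have "\<dots> \<le> a n * B"
        using B[OF that] pos[of n] by (intro mult_left_mono) auto
      finally show ?thesis
        using A_term_nonneg[of n x] by simp
    qed
    show "summable (\<lambda>n. a n * B)"
      by (rule summable_mult2[OF summable])
  qed
  then show ?thesis
    by (simp add: A_partial_eq[abs_def] A_fun_eq[abs_def])
qed

lemma continuous_on_A_fun: "continuous_on UNIV (A_fun a)"
proof -
  have "continuous_on (cball x 1) (A_fun a)" for x
  proof (rule uniform_limit_theorem[OF _ uniform_limit_A_partial])
    have "0 < 1 + (a n)\<^sup>2 * k\<^sup>2" for n k
      by (simp add: add_pos_nonneg)
    then show "\<forall>\<^sub>F N in sequentially. continuous_on (cball x 1) (A_partial a N)"
      unfolding A_partial_def
      by (intro always_eventually allI continuous_intros) (metis less_irrefl)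
  qed auto
  then have "isCont (A_fun a) x" for x
    using continuous_on_interior[of "cball x 1" "A_fun a" x] by simp
  then show ?thesis
    by (simp add: continuous_at_imp_continuous_on)
qed

lemma A_fun_nonneg: "0 \<le> A_fun a k"
  unfolding A_fun_eq by (intro suminf_nonneg summable_A_term A_term_nonneg)

lemma A_fun_le_abs: "A_fun a k \<le> suminf a * \<bar>k\<bar>"
proof -
  have "(\<Sum>n. A_term n k) \<le> (\<Sum>n. a n * \<bar>k\<bar>)"
    by (intro suminf_le A_term_le_abs summable_A_term summable_mult2 summable)
  then show ?thesis
    by (simp add: A_fun_eq suminf_mult2[OF summable])
qed

lemma strict_mono_on_A_fun: "strict_mono_on {0..} (A_fun a)"
proof (rule strict_mono_onI)
  fix x y :: real
  assume "x \<in> {0..}" "y \<in> {0..}" "x < y"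
  then have "0 < (\<Sum>n. A_term n y - A_term n x)"
    by (intro suminf_pos2[where i=0] summable_diff summable_A_term)
      (auto simp: less_imp_le A_term_strict_mono)
  also have "\<dots> = A_fun a y - A_fun a x"
    unfolding A_fun_eq by (rule suminf_diff[OF summable_A_term summable_A_term, symmetric])
  finally show "A_fun a x < A_fun a y"
    by simp
qed

lemma filterlim_A_fun_at_top: "filterlim (A_fun a) at_top at_top"
proof (rule filterlim_at_top_mono)
  show "filterlim (A_term 0) at_top at_top"
    using pos[of 0] unfolding A_term_def by real_asymp
  have "A_term 0 k \<le> A_fun a k" for k
    using sum_le_suminf[OF summable_A_term, of "{0}"] A_term_nonneg by (simp add: A_fun_eq)
  then show "\<forall>\<^sub>F k in at_top. A_term 0 k \<le> A_fun a k"
    by simp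
qed

lemma A_fun_over_abs_tendsto_at_top: "((\<lambda>k. A_fun a k / \<bar>k\<bar>) \<longlongrightarrow> 0) at_top"
proof -
  have term_limit: "((\<lambda>k. A_term n k / \<bar>k\<bar>) \<longlongrightarrow> 0) at_top" for n
  proof -
    have "((\<lambda>k. ln (1 + (a n)\<^sup>2 * k\<^sup>2) / k) \<longlongrightarrow> 0) at_top"
      using pos[of n] by real_asymp
    moreover have "\<forall>\<^sub>F k in at_top. ln (1 + (a n)\<^sup>2 * k\<^sup>2) / k = A_term n k / \<bar>k\<bar>"
      using eventually_gt_at_top[of 0] by eventually_elim (simp add: A_term_def)
    ultimately show ?thesis
      by (simp add: tendsto_cong)
  qed
  have "\<forall>\<^sub>F (n, k) in sequentially \<times>\<^sub>F at_top. norm (A_term n k / \<bar>k\<bar>) \<le> a n"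
  proof -
    have "\<forall>\<^sub>F (n, k) in sequentially \<times>\<^sub>F (at_top :: real filter). 0 < k"
      by (rule eventually_prod2[THEN iffD2]) (auto intro: eventually_gt_at_top)
    then show ?thesis
      by eventually_elim
        (use A_term_le_abs A_term_nonneg in \<open>auto simp: divide_simps mult.commute\<close>)
  qed
  from tannerys_theorem[OF term_limit this summable]
  have "((\<lambda>k. \<Sum>n. A_term n k / \<bar>k\<bar>) \<longlongrightarrow> 0) at_top"
    by simp
  then show ?thesis
    by (simp add: A_fun_eq suminf_divide[OF summable_A_term])
qed

lemma summable_square: "summable (\<lambda>n. (a n)\<^sup>2)"
proof (rule summable_comparison_test[where g="\<lambda>n. suminf a * a n"])
  have "a n \<le> suminf a" for n
    using sum_le_suminf[OF summable, of "{n}"] pos by (simp add: less_imp_le)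
  then have "norm ((a n)\<^sup>2) \<le> suminf a * a n" for n
    using pos[of n] by (simp add: power2_eq_square mult_right_mono)
  then show "\<exists>N. \<forall>n\<ge>N. norm ((a n)\<^sup>2) \<le> suminf a * a n"
    by blast
  show "summable (\<lambda>n. suminf a * a n)"
    by (rule summable_mult[OF summable])
qed

lemma A_fun_over_abs_tendsto_at_0: "((\<lambda>k. A_fun a k / \<bar>k\<bar>) \<longlongrightarrow> 0) (at 0)"
proof (rule Lim_null_comparison)
  define C where "C = (\<Sum>n. (a n)\<^sup>2)"
  have "A_fun a k \<le> C * k\<^sup>2" for k
  proof -
    have "(\<Sum>n. A_term n k) \<le> (\<Sum>n. (a n)\<^sup>2 * k\<^sup>2)"
      by (intro suminf_le A_term_le_square summable_A_term summable_mult2 summable_square)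
    then show ?thesis
      by (simp add: A_fun_eq C_def suminf_mult2[OF summable_square])
  qed
  then have "norm (A_fun a k / \<bar>k\<bar>) \<le> C * \<bar>k\<bar>" for k
  proof (cases "k = 0")
    case False
    have "A_fun a k / \<bar>k\<bar> \<le> C * \<bar>k\<bar> * \<bar>k\<bar> / \<bar>k\<bar>"
      using \<open>A_fun a k \<le> C * k\<^sup>2\<close> by (simp add: divide_right_mono power2_eq_square mult.assoc)
    then show ?thesis
      using False A_fun_nonneg[of k] by simp
  qed (simp add: C_def)
  then show "\<forall>\<^sub>F k in at 0. norm (A_fun a k / \<bar>k\<bar>) \<le> C * \<bar>k\<bar>"
    by simp
  show "((\<lambda>k. C * \<bar>k\<bar>) \<longlongrightarrow> 0) (at 0)"
    by (rule tendsto_eq_intros refl)+ simp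
qed

end

section \<open>The integral of A(k)/k^2\<close>

lemma has_integral_monotone_limit:
  fixes f :: "nat \<Rightarrow> 'a::euclidean_space \<Rightarrow> real"
  assumes f: "\<And>m. (f m has_integral I m) S"
    and mono: "\<And>m x. x \<in> S \<Longrightarrow> f m x \<le> f (Suc m) x"
    and lim: "\<And>x. x \<in> S \<Longrightarrow> (\<lambda>m. f m x) \<longlonglongrightarrow> h x"
    and I: "I \<longlonglongrightarrow> J"
  shows "(h has_integral J) S"
proof -
  have integral_f: "(\<lambda>m. integral S (f m)) = I"
    using f by (auto simp: integral_unique)
  have "bounded (range I)"
    using I by (metis Bseq_eq_bounded convergentI convergent_imp_Bseq)
  then have "h integrable_on S \<and> (\<lambda>m. integral S (f m)) \<longlonglongrightarrow> integral S h"
    by (intro monotone_convergence_increasing)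
      (use f mono lim integral_f in \<open>auto simp: has_integral_integrable\<close>)
  then show ?thesis
    using I integral_f LIMSEQ_unique by (metis integrable_integral)
qed

lemma eventually_mem_Icc_inverse_Suc:
  fixes x :: real
  assumes "0 < x"
  shows "\<forall>\<^sub>F m in sequentially. x \<in> {1 / real (Suc m)..real (Suc m)}"
proof -
  obtain N :: nat where N: "x + 1/x \<le> N"
    using real_arch_simple by blast
  have "x \<in> {1 / real (Suc m)..real (Suc m)}" if "N \<le> m" for m
  proof -
    have "x + 1/x \<le> real (Suc m)" "0 < 1/x"
      using N that assms by auto
    then have "x \<le> real (Suc m)" "1/x \<le> real (Suc m)"
      using assms by linarith+
    then show ?thesis
      using assms by (simp add: field_simps)
  qed
  then show ?thesis
    by (auto simp: eventually_sequentially)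
qed

lemma has_integral_Ioi_antiderivative:
  fixes h F :: "real \<Rightarrow> real"
  assumes nonneg: "\<And>x. 0 < x \<Longrightarrow> 0 \<le> h x"
    and deriv: "\<And>x. 0 < x \<Longrightarrow> (F has_real_derivative h x) (at x)"
    and lim0: "(F \<longlongrightarrow> A) (at_right 0)"
    and lim_top: "(F \<longlongrightarrow> B) at_top"
  shows "(h has_integral (B - A)) {0<..}"
proof -
  define I where "I m = {1 / real (Suc m) .. real (Suc m)}" for m
  define f where "f m x = (if x \<in> I m then h x else 0)" for m x
  have I_sub: "I m \<subseteq> {0<..}" for m
    by (auto simp: I_def intro: less_le_trans[of 0 "1 / real (Suc m)"])
  show ?thesis
  proof (rule has_integral_monotone_limit[where f=f])
    show "(f m has_integral (F (Suc m) - F (1 / Suc m))) {0<..}" for m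
    proof -
      have "(h has_integral (F (Suc m) - F (1 / Suc m))) (I m)"
        unfolding I_def
      proof (rule fundamental_theorem_of_calculus)
        have "1 / real (Suc m) \<le> 1"
          by simp
        then show "1 / real (Suc m) \<le> real (Suc m)"
          by linarith
        fix x assume "x \<in> {1 / real (Suc m)..real (Suc m)}"
        then have "0 < x"
          using I_sub[of m] by (auto simp: I_def)
        then show "(F has_vector_derivative h x) (at x within {1 / real (Suc m)..real (Suc m)})"
          using deriv by (simp add: has_real_derivative_iff_has_vector_derivative[symmetric]
              has_field_derivative_at_within)
      qed
      then show ?thesis
        unfolding f_def[abs_def] using has_integral_restrict[OF I_sub] by blast
    qed
    show "f m x \<le> f (Suc m) x" if "x \<in> {0<..}" for m x
    proof -
      have "I m \<subseteq> I (Suc m)"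
        unfolding I_def by (auto intro: order_trans[OF divide_left_mono[of "real (Suc m)"]])
      then show ?thesis
        using nonneg[of x] that by (auto simp: f_def)
    qed
    show "(\<lambda>m. f m x) \<longlonglongrightarrow> h x" if "x \<in> {0<..}" for x
    proof (rule tendsto_eventually)
      have "0 < x"
        using that by simp
      from eventually_mem_Icc_inverse_Suc[OF this]
      show "\<forall>\<^sub>F m in sequentially. f m x = h x"
        by eventually_elim (simp add: f_def I_def)
    qed
    have "filterlim (\<lambda>m. 1 / real (Suc m)) (at_right 0) sequentially"
      by (rule tendsto_imp_filterlim_at_right)
        (use LIMSEQ_inverse_real_of_nat in \<open>auto simp: inverse_eq_divide\<close>)
    then show "(\<lambda>m. F (Suc m) - F (1 / Suc m)) \<longlonglongrightarrow> B - A"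
      by (intro tendsto_diff filterlim_compose[OF lim0] filterlim_compose[OF lim_top]
          filterlim_compose[OF filterlim_real_sequentially filterlim_Suc])
  qed
qed

lemma has_integral_ln_one_plus_square_over_square:
  fixes c :: real
  assumes c: "0 < c"
  shows "((\<lambda>k. ln (1 + c\<^sup>2 * k\<^sup>2) / k\<^sup>2) has_integral (pi * c)) {0<..}"
proof -
  define F where "F k = - ln (1 + c\<^sup>2 * k\<^sup>2) / k + 2 * c * arctan (c * k)" for k
  have "((\<lambda>k. ln (1 + c\<^sup>2 * k\<^sup>2) / k\<^sup>2) has_integral (c * pi - 0)) {0<..}"
  proof (rule has_integral_Ioi_antiderivative[where F=F])
    show "(F has_real_derivative ln (1 + c\<^sup>2 * x\<^sup>2) / x\<^sup>2) (at x)" if x: "0 < x" for x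
    proof -
      have P: "0 < 1 + c\<^sup>2 * x\<^sup>2"
        by (simp add: add_pos_nonneg)
      have "(F has_real_derivative
          - ((2 * c\<^sup>2 * x / (1 + c\<^sup>2 * x\<^sup>2)) * x - ln (1 + c\<^sup>2 * x\<^sup>2)) / x\<^sup>2
          + 2 * c * (c / (1 + (c * x)\<^sup>2))) (at x)"
        unfolding F_def using x P
        by (auto intro!: derivative_eq_intros simp: field_simps power2_eq_square)
      moreover have "(2 * c\<^sup>2 * x / (1 + c\<^sup>2 * x\<^sup>2)) * x / x\<^sup>2 = 2 * c * (c / (1 + (c * x)\<^sup>2))"
      proof -
        have "(2 * c\<^sup>2 * x / (1 + c\<^sup>2 * x\<^sup>2)) * x / x\<^sup>2 = 2 * c\<^sup>2 / (1 + c\<^sup>2 * x\<^sup>2) * (x * x / (x * x))"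
          by (simp add: power2_eq_square)
        then show ?thesis
          using x by (simp add: power_mult_distrib power2_eq_square[of c] mult.assoc)
      qed
      ultimately show ?thesis
        by (simp add: diff_divide_distrib)
    qed
    show "(F \<longlongrightarrow> 0) (at_right 0)" "(F \<longlongrightarrow> c * pi) at_top"
      unfolding F_def using c by real_asymp+
  qed simp
  then show ?thesis
    by (simp add: mult.commute)
qed

lemma (in positive_summable) A_fun_over_square_has_integral:
  "((\<lambda>k. A_fun a k / k\<^sup>2) has_integral (pi * suminf a)) {0<..}"
proof (rule has_integral_monotone_limit[where f="\<lambda>N k. A_partial a N k / k\<^sup>2"])
  show "((\<lambda>k. A_partial a N k / k\<^sup>2) has_integral (\<Sum>n<N. pi * a n)) {0<..}" for N
    unfolding A_partial_eq sum_divide_distrib A_term_def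
    by (intro has_integral_sum has_integral_ln_one_plus_square_over_square pos) auto
  show "A_partial a N k / k\<^sup>2 \<le> A_partial a (Suc N) k / k\<^sup>2" for N k
    by (simp add: A_partial_eq divide_right_mono A_term_nonneg)
  show "(\<lambda>N. A_partial a N k / k\<^sup>2) \<longlonglongrightarrow> A_fun a k / k\<^sup>2" for k
    unfolding divide_inverse by (intro tendsto_mult_right A_partial_tendsto)
  show "(\<lambda>N. \<Sum>n<N. pi * a n) \<longlonglongrightarrow> pi * suminf a"
    unfolding sum_distrib_left[symmetric] by (intro tendsto_mult_left summable_LIMSEQ summable)
qed

section \<open>Integrals of compactly supported functions on the line\<close>

definition supported_in :: "real \<Rightarrow> (real \<Rightarrow> 'a::zero) \<Rightarrow> bool" where
  "supported_in R g \<longleftrightarrow> (\<forall>x. R < \<bar>x\<bar> \<longrightarrow> g x = 0)"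

lemma supported_in_mono: "supported_in R g \<Longrightarrow> R \<le> R' \<Longrightarrow> supported_in R' g"
  by (simp add: supported_in_def)

lemma has_integral_supported:
  fixes g :: "real \<Rightarrow> 'a::banach"
  assumes "continuous_on UNIV g" "supported_in R g"
  shows "(g has_integral integral {-R..R} g) UNIV"
proof (rule has_integral_on_superset)
  show "(g has_integral integral {-R..R} g) {-R..R}"
    using assms(1) by (intro integrable_integral integrable_continuous_interval)
      (auto intro: continuous_on_subset)
qed (use assms(2) in \<open>auto simp: supported_in_def\<close>)

lemma integral_supported:
  fixes g :: "real \<Rightarrow> 'a::banach"
  assumes "continuous_on UNIV g" "supported_in R g"
  shows "integral UNIV g = integral {-R..R} g"
  using has_integral_supported[OF assms] by (rule integral_unique)

lemma has_integral_UNIV_supported: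
  fixes g :: "real \<Rightarrow> 'a::banach"
  assumes "continuous_on UNIV g" "supported_in R g"
  shows "(g has_integral integral UNIV g) UNIV"
  using has_integral_supported[OF assms] integral_supported[OF assms] by simp

lemma has_integral_Icc_supported:
  fixes g :: "real \<Rightarrow> 'a::banach"
  assumes "continuous_on UNIV g" "supported_in R g"
  shows "(g has_integral integral UNIV g) {-R..R}"
  using integral_supported[OF assms] assms(1)
  by (metis continuous_on_subset integrable_continuous_interval integrable_integral subset_UNIV)

lemma has_integral_affine_supported:
  fixes g :: "real \<Rightarrow> 'a::banach"
  assumes cont: "continuous_on UNIV g" and supp: "supported_in R g" and "0 < m"
  shows "((\<lambda>x. g (m * x + c)) has_integral integral UNIV g /\<^sub>R m) UNIV"
proof (rule has_integral_on_superset)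
  from has_integral_Icc_supported[OF cont supp]
  show "((\<lambda>x. g (m * x + c)) has_integral integral UNIV g /\<^sub>R m) {(-R - c) / m..(R - c) / m}"
    using has_integral_affinity_iff[OF \<open>0 < m\<close>, of g c "integral UNIV g" "-R" R]
    by (simp add: cbox_interval divide_inverse mult.commute)
  show "g (m * x + c) = 0" if "x \<notin> {(-R - c) / m..(R - c) / m}" for x
  proof -
    have "x * m < -R - c \<or> R - c < x * m"
      using that \<open>0 < m\<close> by (auto simp: not_le pos_less_divide_eq pos_divide_less_eq)
    then have "R < \<bar>m * x + c\<bar>"
      by (auto simp: mult.commute)
    then show ?thesis
      using supp by (simp add: supported_in_def)
  qed
qed auto

lemma has_integral_reflect_supported:
  fixes g :: "real \<Rightarrow> 'a::banach"
  assumes cont: "continuous_on UNIV g" and supp: "supported_in R g"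
  shows "((\<lambda>x. g (- x)) has_integral integral UNIV g) UNIV"
proof (rule has_integral_on_superset)
  from has_integral_Icc_supported[OF cont supp]
  show "((\<lambda>x. g (- x)) has_integral integral UNIV g) {-R..R}"
    using has_integral_reflect_real[where f=g and a="-R" and b=R] by simp
qed (use supp in \<open>auto simp: supported_in_def\<close>)

lemma has_integral_norm_le_has_integral:
  fixes f :: "'a::euclidean_space \<Rightarrow> 'b::banach"
  assumes "(f has_integral i) S" "(g has_integral j) S" "\<And>x. x \<in> S \<Longrightarrow> norm (f x) \<le> g x"
  shows "norm i \<le> j"
  using integral_norm_bound_integral[of f S g] assms
  by (auto simp: integral_unique has_integral_integrable)

section \<open>The Fourier transform\<close>

definition fourier_kernel :: "real \<Rightarrow> real \<Rightarrow> complex" where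
  "fourier_kernel k x = exp (- \<i> * complex_of_real (k * x))"

lemma continuous_on_fourier_kernel: "continuous_on A (fourier_kernel k)"
  unfolding fourier_kernel_def by (intro continuous_intros)

lemma fourier_kernel_add: "fourier_kernel k (x + y) = fourier_kernel k x * fourier_kernel k y"
  by (simp add: fourier_kernel_def distrib_left algebra_simps flip: exp_add)

lemma norm_fourier_kernel [simp]: "norm (fourier_kernel k x) = 1"
  by (simp add: fourier_kernel_def)

lemma fourier_eq_integral_kernel:
  "fourier f k = integral UNIV (\<lambda>x. fourier_kernel k x * complex_of_real (f x))"
  by (simp add: fourier_def fourier_kernel_def)

lemma fourier_eq_integral_interval:
  assumes "continuous_on UNIV f" "supported_in R f"
  shows "fourier f k = integral {-R..R} (\<lambda>x. fourier_kernel k x * complex_of_real (f x))"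
  unfolding fourier_eq_integral_kernel
proof (rule integral_supported)
  show "continuous_on UNIV (\<lambda>x. fourier_kernel k x * complex_of_real (f x))"
    by (intro continuous_intros continuous_on_fourier_kernel continuous_on_compose2[OF assms(1)]) auto
  show "supported_in R (\<lambda>x. fourier_kernel k x * complex_of_real (f x))"
    using assms(2) by (simp add: supported_in_def)
qed

lemma norm_fourier_diff_le:
  assumes f: "continuous_on UNIV f" "supported_in R f"
    and g: "continuous_on UNIV g" "supported_in R g"
    and bound: "\<And>x. \<bar>f x - g x\<bar> \<le> B" and "0 \<le> R"
  shows "norm (fourier f k - fourier g k) \<le> B * (2 * R)"
proof -
  define D where "D x = fourier_kernel k x * complex_of_real (f x - g x)" for x
  have int_f: "(\<lambda>x. fourier_kernel k x * complex_of_real (f x)) integrable_on {-R..R}"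
    by (intro integrable_continuous_interval continuous_intros continuous_on_fourier_kernel
        continuous_on_compose2[OF f(1)]) auto
  have int_g: "(\<lambda>x. fourier_kernel k x * complex_of_real (g x)) integrable_on {-R..R}"
    by (intro integrable_continuous_interval continuous_intros continuous_on_fourier_kernel
        continuous_on_compose2[OF g(1)]) auto
  have "fourier f k - fourier g k
      = integral {-R..R} (\<lambda>x. fourier_kernel k x * complex_of_real (f x))
        - integral {-R..R} (\<lambda>x. fourier_kernel k x * complex_of_real (g x))"
    using fourier_eq_integral_interval[OF f] fourier_eq_integral_interval[OF g] by simp
  also have "\<dots> = integral {-R..R} (\<lambda>x. fourier_kernel k x * complex_of_real (f x)
      - fourier_kernel k x * complex_of_real (g x))"
    by (rule integral_diff[OF int_f int_g, symmetric])
  also have "\<dots> = integral {-R..R} D"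
    by (simp add: D_def[abs_def] right_diff_distrib)
  finally have eq: "fourier f k - fourier g k = integral {-R..R} D" .
  have integral_D: "(D has_integral integral {-R..R} D) {-R..R}"
    unfolding D_def using integrable_diff[OF int_f int_g]
    by (simp add: algebra_simps integrable_integral)
  have integral_B: "((\<lambda>x. B) has_integral B * (2 * R)) {-R..R}"
    using has_integral_const_real[of B "-R" R] \<open>0 \<le> R\<close> by (simp add: mult.commute)
  have "norm (D x) \<le> B" for x
    using bound[of x] by (simp add: D_def norm_mult flip: of_real_diff)
  from has_integral_norm_le_has_integral[OF integral_D integral_B this]
  show ?thesis
    by (simp only: eq)
qed

lemma has_integral_fourier_translate:
  assumes "continuous_on UNIV h" "supported_in T h"
  shows "((\<lambda>x. fourier_kernel k x * complex_of_real (h (x - y)))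
           has_integral fourier_kernel k y * fourier h k) UNIV"
proof -
  define \<psi> where "\<psi> x = fourier_kernel k x * complex_of_real (h x)" for x
  have "continuous_on UNIV \<psi>"
    unfolding \<psi>_def
    by (intro continuous_intros continuous_on_fourier_kernel continuous_on_compose2[OF assms(1)]) auto
  moreover have "supported_in T \<psi>"
    using assms(2) by (simp add: supported_in_def \<psi>_def)
  ultimately have "((\<lambda>x. \<psi> (1 * x + - y)) has_integral integral UNIV \<psi> /\<^sub>R 1) UNIV"
    by (rule has_integral_affine_supported) simp
  moreover have "integral UNIV \<psi> = fourier h k"
    by (simp add: \<psi>_def[abs_def] fourier_eq_integral_kernel)
  ultimately have "((\<lambda>x. \<psi> (x - y)) has_integral fourier h k) UNIV"
    by simp
  then have "((\<lambda>x. fourier_kernel k y * \<psi> (x - y)) has_integral fourier_kernel k y * fourier h k) UNIV"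
    by (simp add: has_integral_mult_right)
  moreover have "fourier_kernel k y * \<psi> (x - y) = fourier_kernel k x * complex_of_real (h (x - y))" for x
    using fourier_kernel_add[of k y "x - y"] by (simp add: \<psi>_def)
  ultimately show ?thesis
    by simp
qed

lemma integral_interval_fourier_translate:
  assumes "continuous_on UNIV h" "supported_in T h" "\<bar>y\<bar> \<le> S"
  shows "integral {-(S + T)..S + T} (\<lambda>x. fourier_kernel k x * complex_of_real (h (x - y)))
    = fourier_kernel k y * fourier h k"
proof -
  have "continuous_on UNIV (\<lambda>x. fourier_kernel k x * complex_of_real (h (x - y)))"
    by (intro continuous_intros continuous_on_fourier_kernel continuous_on_compose2[OF assms(1)]) auto
  moreover have "supported_in (S + T) (\<lambda>x. fourier_kernel k x * complex_of_real (h (x - y)))"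
    using assms(2,3) by (auto simp: supported_in_def)
  ultimately have "integral {-(S + T)..S + T} (\<lambda>x. fourier_kernel k x * complex_of_real (h (x - y)))
      = integral UNIV (\<lambda>x. fourier_kernel k x * complex_of_real (h (x - y)))"
    by (rule integral_supported[symmetric])
  also have "\<dots> = fourier_kernel k y * fourier h k"
    using has_integral_fourier_translate[OF assms(1,2)] by (rule integral_unique)
  finally show ?thesis .
qed

section \<open>The bump \<open>eta\<close> and its Fourier transform\<close>

lemma lipschitz_on_UNIV_realI:
  fixes f :: "real \<Rightarrow> real"
  assumes "\<And>x y. \<bar>f x - f y\<bar> \<le> L * \<bar>x - y\<bar>" "0 \<le> L"
  shows "L-lipschitz_on UNIV f"
  using assms by (intro lipschitz_onI) (auto simp: dist_real_def)

lemma lipschitz_on_UNIV_realD: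
  fixes f :: "real \<Rightarrow> real"
  shows "L-lipschitz_on UNIV f \<Longrightarrow> \<bar>f x - f y\<bar> \<le> L * \<bar>x - y\<bar>"
  using lipschitz_onD[of L UNIV f x y] by (simp add: dist_real_def)

definition eta_hat :: "real \<Rightarrow> real" where
  "eta_hat s = (if s = 0 then 1 else 6 * (s - sin s) / s ^ 3)"

lemma eta_eq_max: "eta x = 3/2 * (max 0 (1 - \<bar>x\<bar>))\<^sup>2"
  by (simp add: eta_def max_def)

lemma continuous_on_eta: "continuous_on UNIV eta"
  unfolding eta_eq_max[abs_def] by (intro continuous_intros)

lemma supported_in_eta: "supported_in 1 eta"
  by (simp add: supported_in_def eta_def)

lemma eta_nonneg: "0 \<le> eta x"
  by (simp add: eta_def)

lemma eta_minus: "eta (- x) = eta x"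
  by (simp add: eta_def)

lemma lipschitz_eta: "3-lipschitz_on UNIV eta"
proof (rule lipschitz_on_UNIV_realI)
  fix x y :: real
  define p where "p = max 0 (1 - \<bar>x\<bar>)"
  define q where "q = max 0 (1 - \<bar>y\<bar>)"
  have p: "0 \<le> p" "p \<le> 1" and q: "0 \<le> q" "q \<le> 1"
    by (auto simp: p_def q_def)
  have pq: "\<bar>p - q\<bar> \<le> \<bar>x - y\<bar>"
    unfolding p_def q_def by (auto simp: max_def abs_if)
  have "eta x - eta y = 3/2 * ((p - q) * (p + q))"
    by (simp add: eta_eq_max p_def q_def algebra_simps power2_eq_square)
  then have "\<bar>eta x - eta y\<bar> = 3/2 * (\<bar>p - q\<bar> * \<bar>p + q\<bar>)"
    by (simp only: abs_mult)
  also have "\<dots> \<le> 3/2 * (\<bar>x - y\<bar> * 2)"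
    using p q pq by (intro mult_left_mono mult_mono) auto
  finally show "\<bar>eta x - eta y\<bar> \<le> 3 * \<bar>x - y\<bar>"
    by simp
qed simp

lemma has_integral_eta_hat: "((\<lambda>x. 3 * cos (k * x) * (1 - x)\<^sup>2) has_integral eta_hat k) {0..1}"
proof (cases "k = 0")
  case True
  define G where "G u = - ((1 - u) ^ 3)" for u :: real
  have "((\<lambda>x. 3 * (1 - x)\<^sup>2) has_integral (G 1 - G 0)) {0..1}"
    unfolding G_def
    by (intro fundamental_theorem_of_calculus)
      (auto intro!: derivative_eq_intros
        simp: has_real_derivative_iff_has_vector_derivative[symmetric] power2_eq_square)
  then show ?thesis
    using True by (simp add: eta_hat_def G_def)
next
  case False
  define F where
    "F u = 3 * ((1 - u)\<^sup>2 * sin (k * u) / k - 2 * (1 - u) * cos (k * u) / k\<^sup>2 - 2 * sin (k * u) / k ^ 3)"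
    for u
  have "(F has_real_derivative 3 * cos (k * x) * (1 - x)\<^sup>2) (at x)" for x
    using False unfolding F_def
    by (auto intro!: derivative_eq_intros simp: field_simps power2_eq_square power3_eq_cube)
  then have "((\<lambda>x. 3 * cos (k * x) * (1 - x)\<^sup>2) has_integral (F 1 - F 0)) {0..1}"
    by (intro fundamental_theorem_of_calculus)
      (auto simp: has_real_derivative_iff_has_vector_derivative[symmetric]
        intro: has_field_derivative_at_within)
  moreover have "F 1 - F 0 = eta_hat k"
    using False by (simp add: F_def eta_hat_def field_simps power2_eq_square power3_eq_cube)
  ultimately show ?thesis
    by simp
qed

text \<open>Folding the integral over [-1, 1] onto [0, 1] turns the kernel into 2 cos(kx), as eta is even.\<close>

lemma fourier_eta: "fourier eta k = complex_of_real (eta_hat k)"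
proof -
  define H where "H x = fourier_kernel k x * complex_of_real (eta x)" for x
  have "continuous_on UNIV H"
    unfolding H_def
    by (intro continuous_intros continuous_on_fourier_kernel continuous_on_compose2[OF continuous_on_eta]) auto
  then obtain I1 I2 where I1: "(H has_integral I1) {-1..0}" and I2: "(H has_integral I2) {0..1}"
    by (meson continuous_on_subset integrable_continuous_interval integrable_integral subset_UNIV)
  have "((\<lambda>x. H (- x)) has_integral I1) {0..1}"
    using I1 has_integral_reflect_real[where f=H and a="-1" and b=0] by simp
  then have "((\<lambda>x. H x + H (- x)) has_integral I2 + I1) {0..1}"
    by (rule has_integral_add[OF I2])
  moreover have "((\<lambda>x. H x + H (- x)) has_integral complex_of_real (eta_hat k)) {0..1}"
  proof (rule has_integral_spike_finite[OF finite.emptyI _ has_integral_of_real[OF has_integral_eta_hat]])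
    fix x :: real assume "x \<in> {0..1} - {}"
    have "H x + H (- x) = (exp (- \<i> * complex_of_real (k * x)) + exp (\<i> * complex_of_real (k * x)))
        * complex_of_real (eta x)"
      by (simp add: H_def fourier_kernel_def eta_minus algebra_simps)
    also have "exp (- \<i> * complex_of_real (k * x)) + exp (\<i> * complex_of_real (k * x))
        = complex_of_real (2 * cos (k * x))"
      by (simp add: cos_exp_eq cos_of_real[symmetric] algebra_simps)
    finally show "H x + H (- x) = complex_of_real (3 * cos (k * x) * (1 - x)\<^sup>2)"
      using \<open>x \<in> {0..1} - {}\<close> by (simp add: eta_def)
  qed
  ultimately have "I2 + I1 = complex_of_real (eta_hat k)"
    by (rule has_integral_unique)
  moreover have "(H has_integral I1 + I2) UNIV"
    using has_integral_combine[OF _ _ I1 I2] supported_in_eta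
    by (intro has_integral_on_superset[where T=UNIV]) (auto simp: H_def supported_in_def)
  ultimately show ?thesis
    unfolding fourier_eq_integral_kernel H_def[symmetric] by (simp add: integral_unique add.commute)
qed

lemma continuous_on_eta_scaled: "0 < c \<Longrightarrow> continuous_on UNIV (eta_scaled c)"
  unfolding eta_scaled_def
  by (intro continuous_intros continuous_on_compose2[OF continuous_on_eta]) auto

lemma supported_in_eta_scaled: "0 < c \<Longrightarrow> supported_in c (eta_scaled c)"
  by (auto simp: supported_in_def eta_scaled_def eta_def abs_div field_simps)

lemma eta_scaled_nonneg: "0 < c \<Longrightarrow> 0 \<le> eta_scaled c x"
  by (simp add: eta_scaled_def eta_nonneg)

lemma lipschitz_eta_scaled:
  assumes "0 < c"
  shows "(3 / c\<^sup>2)-lipschitz_on UNIV (eta_scaled c)"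
proof (rule lipschitz_on_UNIV_realI)
  fix x y
  have "eta_scaled c x - eta_scaled c y = (1/c) * (eta (x/c) - eta (y/c))"
    by (simp add: eta_scaled_def algebra_simps)
  then have "\<bar>eta_scaled c x - eta_scaled c y\<bar> = (1/c) * \<bar>eta (x/c) - eta (y/c)\<bar>"
    using assms by (simp add: abs_mult)
  also have "\<dots> \<le> (1/c) * (3 * \<bar>x/c - y/c\<bar>)"
    using lipschitz_on_UNIV_realD[OF lipschitz_eta] assms by (intro mult_left_mono) auto
  also have "\<dots> = 3 / c\<^sup>2 * \<bar>x - y\<bar>"
    using assms by (simp add: field_simps power2_eq_square abs_div flip: diff_divide_distrib)
  finally show "\<bar>eta_scaled c x - eta_scaled c y\<bar> \<le> 3 / c\<^sup>2 * \<bar>x - y\<bar>" .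
qed simp

lemma fourier_eta_scaled:
  assumes "0 < c"
  shows "fourier (eta_scaled c) k = complex_of_real (eta_hat (c * k))"
proof -
  define G where "G u = fourier_kernel (c * k) u * complex_of_real (eta u)" for u
  have "continuous_on UNIV G"
    unfolding G_def
    by (intro continuous_intros continuous_on_fourier_kernel continuous_on_compose2[OF continuous_on_eta]) auto
  moreover have "supported_in 1 G"
    using supported_in_eta by (simp add: supported_in_def G_def)
  ultimately have "((\<lambda>x. G ((1/c) * x)) has_integral integral UNIV G /\<^sub>R (1/c)) UNIV"
    using has_integral_affine_supported[of G 1 "1/c" 0] assms by simp
  then have "((\<lambda>x. complex_of_real (1/c) * G ((1/c) * x))
      has_integral complex_of_real (1/c) * (integral UNIV G /\<^sub>R (1/c))) UNIV"
    by (rule has_integral_mult_right)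
  moreover have "complex_of_real (1/c) * (integral UNIV G /\<^sub>R (1/c)) = integral UNIV G"
    using assms by (simp add: scaleR_conv_of_real)
  moreover have "complex_of_real (1/c) * G ((1/c) * x)
      = fourier_kernel k x * complex_of_real (eta_scaled c x)" for x
    using assms by (simp add: G_def eta_scaled_def fourier_kernel_def)
  ultimately have "fourier (eta_scaled c) k = integral UNIV G"
    unfolding fourier_eq_integral_kernel by (metis (no_types, lifting) ext integral_unique)
  also have "\<dots> = fourier eta (c * k)"
    unfolding fourier_eq_integral_kernel G_def ..
  finally show ?thesis
    by (simp add: fourier_eta)
qed

lemma has_integral_eta_scaled:
  assumes "0 < c"
  shows "(eta_scaled c has_integral 1) UNIV"
proof -
  have "(eta_scaled c has_integral integral UNIV (eta_scaled c)) UNIV"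
    using continuous_on_eta_scaled[OF assms] supported_in_eta_scaled[OF assms]
    by (rule has_integral_UNIV_supported)
  moreover have "fourier (eta_scaled c) 0 = complex_of_real (integral UNIV (eta_scaled c))"
    using integral_unique[OF has_integral_of_real[OF calculation]] by (simp add: fourier_def)
  ultimately show ?thesis
    using fourier_eta_scaled[OF assms, of 0] by (simp add: eta_hat_def)
qed

section \<open>Rational bounds for \<open>eta_hat\<close>\<close>

lemma sin_le_taylor7:
  fixes x :: real
  assumes "0 \<le> x"
  shows "sin x \<le> x - x^3/6 + x^5/120 + x^7/5040"
proof -
  have "\<bar>sin x - (\<Sum>m<7. sin_coeff m * x ^ m)\<bar> \<le> inverse (fact 7) * \<bar>x\<bar> ^ 7"
    by (rule Maclaurin_sin_bound)
  moreover have "(\<Sum>m<7. sin_coeff m * x ^ m) = x - x^3/6 + x^5/120"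
    by (simp add: lessThan_nat_numeral sin_coeff_def fact_numeral field_simps)
  ultimately have "\<bar>sin x - (x - x^3/6 + x^5/120)\<bar> \<le> x^7/5040"
    using assms by (simp add: fact_numeral)
  then show ?thesis
    by (simp only: abs_le_iff) linarith
qed

lemma sin_ge_taylor9:
  fixes x :: real
  assumes "0 \<le> x"
  shows "x - x^3/6 + x^5/120 - x^7/5040 - x^9/362880 \<le> sin x"
proof -
  have "\<bar>sin x - (\<Sum>m<9. sin_coeff m * x ^ m)\<bar> \<le> inverse (fact 9) * \<bar>x\<bar> ^ 9"
    by (rule Maclaurin_sin_bound)
  moreover have "(\<Sum>m<9. sin_coeff m * x ^ m) = x - x^3/6 + x^5/120 - x^7/5040"
    by (simp add: lessThan_nat_numeral sin_coeff_def fact_numeral field_simps)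
  ultimately have "\<bar>sin x - (x - x^3/6 + x^5/120 - x^7/5040)\<bar> \<le> x^9/362880"
    using assms by (simp add: fact_numeral)
  then show ?thesis
    by (simp only: abs_le_iff) linarith
qed

lemma sin_le_zero_pi_2pi:
  fixes t :: real
  assumes "pi \<le> t" "t \<le> 2 * pi"
  shows "sin t \<le> 0"
  using sin_ge_zero[of "t - pi"] assms by simp

lemma sin_ge_cubic_over_quadratic_le_3:
  fixes t :: real
  assumes t: "0 \<le> t" "t \<le> 3"
  shows "120 * t - 14 * t^3 \<le> (120 + 6 * t\<^sup>2) * sin t"
proof -
  let ?L = "t - t^3/6 + t^5/120 - t^7/5040 - t^9/362880"
  have "t\<^sup>2 \<le> 9" "t^4 \<le> 81"
    using power_mono[OF t(2,1), of 2] power_mono[OF t(2,1), of 4] by simp_all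
  then have "0 \<le> t^7 * (11/420 - 23 * t\<^sup>2/15120 - t^4/60480)"
    using t by simp
  also have "t^7 * (11/420 - 23 * t\<^sup>2/15120 - t^4/60480) = (120 + 6 * t\<^sup>2) * ?L - (120 * t - 14 * t^3)"
    by (simp add: eval_nat_numeral field_simps)
  also have "(120 + 6 * t\<^sup>2) * ?L \<le> (120 + 6 * t\<^sup>2) * sin t"
    using sin_ge_taylor9[OF t(1)] by (intro mult_left_mono) auto
  finally show ?thesis
    by simp
qed

lemma sin_ge_cubic_over_quadratic:
  fixes t :: real
  assumes t: "0 \<le> t"
  shows "120 * t - 14 * t^3 \<le> (120 + 6 * t\<^sup>2) * sin t"
proof -
  consider "t \<le> 3" | "3 \<le> t" "t \<le> pi" | "pi \<le> t"
    by linarith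
  then show ?thesis
  proof cases
    case 1
    then show ?thesis
      by (rule sin_ge_cubic_over_quadratic_le_3[OF t])
  next
    case 2
    have "120 * t - 14 * t^3 = t * (120 - 14 * t\<^sup>2)"
      by (simp add: algebra_simps power2_eq_square power3_eq_cube)
    also have "\<dots> \<le> 0"
      using 2 power_mono[of 3 t 2] t by (intro mult_nonneg_nonpos) auto
    also have "0 \<le> (120 + 6 * t\<^sup>2) * sin t"
      using sin_ge_zero[OF t 2(2)] by simp
    finally show ?thesis .
  next
    case 3
    have "3 \<le> pi" "3 \<le> t"
      using 3 pi_gt3 by auto
    then have "18 * t\<^sup>2 \<le> 6 * pi * t\<^sup>2" "0 \<le> (t - 3) * (8 * t\<^sup>2 + 42 * t - 114)"
      using power_mono[of 3 t 2] by (auto intro!: mult_nonneg_nonneg mult_right_mono)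
    then have "120 * t - 14 * t^3 \<le> (120 + 6 * t\<^sup>2) * (pi - t)"
      using \<open>3 \<le> pi\<close> by (simp add: algebra_simps power2_eq_square power3_eq_cube)
    also have "\<dots> \<le> (120 + 6 * t\<^sup>2) * sin t"
      using sin_x_le_x[of "t - pi"] 3 by (intro mult_left_mono) auto
    finally show ?thesis .
  qed
qed

lemma sin_le_cubic_over_quadratic_le_pi:
  fixes t :: real
  assumes t: "0 \<le> t" "t \<le> pi"
  shows "(240 + 42 * t\<^sup>2) * sin t \<le> 240 * t + 2 * t^3"
proof -
  let ?U = "t - t^3/6 + t^5/120 + t^7/5040"
  have "t\<^sup>2 \<le> 3.1416\<^sup>2"
    using t pi_approx(2) by (intro power_mono) auto
  then have t2: "t\<^sup>2 \<le> 10"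
    by (simp add: power2_eq_square)
  then have "t^4 \<le> 100"
    using power_mono[OF t2, of 2] by (simp flip: power_mult)
  then have "0 \<le> t^5 * (5 - 167 * t\<^sup>2/420 - t^4/120)"
    using t t2 by simp
  then have "(240 + 42 * t\<^sup>2) * ?U \<le> 240 * t + 2 * t^3"
    by (simp add: eval_nat_numeral field_simps)
  moreover have "(240 + 42 * t\<^sup>2) * sin t \<le> (240 + 42 * t\<^sup>2) * ?U"
    using sin_le_taylor7[OF t(1)] by (intro mult_left_mono) auto
  ultimately show ?thesis
    by linarith
qed

lemma cubic_over_quadratic_bound_on_interval:
  fixes t l r c :: real
  assumes "0 \<le> l" "l \<le> t" "t \<le> r" "sin t \<le> c" "0 \<le> c" "(240 + 42 * r\<^sup>2) * c \<le> 240 * l + 2 * l^3"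
  shows "(240 + 42 * t\<^sup>2) * sin t \<le> 240 * t + 2 * t^3"
proof -
  have "t\<^sup>2 \<le> r\<^sup>2" "l^3 \<le> t^3"
    using assms by (auto intro: power_mono)
  have "(240 + 42 * t\<^sup>2) * sin t \<le> (240 + 42 * t\<^sup>2) * c"
    using assms by (intro mult_left_mono) auto
  also have "\<dots> \<le> (240 + 42 * r\<^sup>2) * c"
    using \<open>t\<^sup>2 \<le> r\<^sup>2\<close> assms by (intro mult_right_mono) auto
  also have "\<dots> \<le> 240 * t + 2 * t^3"
    using assms \<open>l^3 \<le> t^3\<close> by linarith
  finally show ?thesis .
qed

lemma sin_le_cubic_over_quadratic_of_cubic_nonneg:
  fixes t :: real
  assumes "0 \<le> t" "0 \<le> t^3 - 21 * t\<^sup>2 + 120 * t - 120"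
  shows "(240 + 42 * t\<^sup>2) * sin t \<le> 240 * t + 2 * t^3"
  by (rule cubic_over_quadratic_bound_on_interval[of t t t 1]) (use assms in auto)

lemma cubic_nonneg_between_4_and_8_2:
  fixes t :: real
  assumes "4 \<le> t" "t \<le> 8.2"
  shows "0 \<le> t^3 - 21 * t\<^sup>2 + 120 * t - 120"
proof -
  have "125 * (t^3 - 21 * t\<^sup>2 + 120 * t - 120) = (41 - 5 * t) * ((5 * t - 20) * (41 - 5 * t) + 15 * t + 444) + 416"
    by (simp add: algebra_simps power2_eq_square power3_eq_cube)
  moreover have "0 \<le> (41 - 5 * t) * ((5 * t - 20) * (41 - 5 * t) + 15 * t + 444)"
    using assms by (intro mult_nonneg_nonneg add_nonneg_nonneg) auto
  ultimately have "0 \<le> 125 * (t^3 - 21 * t\<^sup>2 + 120 * t - 120)"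
    by simp
  then show ?thesis
    by simp
qed

lemma cubic_nonneg_ge_12:
  fixes t :: real
  assumes "12 \<le> t"
  shows "0 \<le> t^3 - 21 * t\<^sup>2 + 120 * t - 120"
proof -
  have "t^3 - 21 * t\<^sup>2 + 120 * t - 120 = (t - 12) * (t * (t - 9) + 12) + 24"
    by (simp add: algebra_simps power2_eq_square power3_eq_cube)
  moreover have "0 \<le> (t - 12) * (t * (t - 9) + 12)"
    using assms by (intro mult_nonneg_nonneg add_nonneg_nonneg) auto
  ultimately show ?thesis
    by linarith
qed

text \<open>Since 3.1416 \<ge> pi, the rational number 3 * 3.1416 - l bounds the reflected argument 3 pi - t.\<close>

lemma sin_le_sin_3pi_minus:
  fixes t l :: real
  assumes "l \<le> t" "t \<le> 3 * pi" "3 * 3.1416 - l \<le> pi / 2"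
  shows "sin t \<le> sin (3 * 3.1416 - l)"
proof -
  have "sin t = sin ((pi - t) + 2 * pi)"
    by (simp only: sin_periodic sin_pi_minus)
  also have "\<dots> = sin (3 * pi - t)"
    by (rule arg_cong[where f=sin]) simp
  also have "\<dots> \<le> sin (3 * 3.1416 - l)"
    using assms pi_approx by (intro sin_monotone_2pi_le) auto
  finally show ?thesis .
qed

lemma sin_le_cubic_over_quadratic_near_3pi:
  fixes t :: real
  assumes t: "8.2 \<le> t" "t \<le> 3 * pi"
  shows "(240 + 42 * t\<^sup>2) * sin t \<le> 240 * t + 2 * t^3"
proof -
  have piece: "(240 + 42 * t\<^sup>2) * sin t \<le> 240 * t + 2 * t^3"
    if "l \<le> t" "t \<le> r" "8.2 \<le> l" "l \<le> 9" "u = 3 * 3.1416 - l" "0 \<le> u - u^3/6 + u^5/120 + u^7/5040"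
      "(240 + 42 * r\<^sup>2) * (u - u^3/6 + u^5/120 + u^7/5040) \<le> 240 * l + 2 * l^3"
    for l r u :: real
  proof (rule cubic_over_quadratic_bound_on_interval[where c="u - u^3/6 + u^5/120 + u^7/5040"])
    have "sin t \<le> sin u"
      unfolding \<open>u = 3 * 3.1416 - l\<close> using that t pi_approx by (intro sin_le_sin_3pi_minus) auto
    also have "\<dots> \<le> u - u^3/6 + u^5/120 + u^7/5040"
      using that pi_approx by (intro sin_le_taylor7) simp
    finally show "sin t \<le> u - u^3/6 + u^5/120 + u^7/5040" .
  qed (use that in auto)
  consider "t \<le> 8.4" | "8.4 \<le> t" "t \<le> 8.8" | "8.8 \<le> t"
    by linarith
  then show ?thesis
  proof cases
    case 1
    then show ?thesis
      using t by (intro piece[of "8.2" "8.4" "3 * 3.1416 - 8.2"]) (auto simp: power_divide)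
  next
    case 2
    then show ?thesis
      by (intro piece[of "8.4" "8.8" "3 * 3.1416 - 8.4"]) (auto simp: power_divide)
  next
    case 3
    moreover have "t \<le> 9.43"
      using t pi_approx(2) by simp
    ultimately show ?thesis
      by (intro piece[of "8.8" "9.43" "3 * 3.1416 - 8.8"]) (auto simp: power_divide)
  qed
qed

lemma sin_le_cubic_over_quadratic:
  fixes t :: real
  assumes t: "0 \<le> t"
  shows "(240 + 42 * t\<^sup>2) * sin t \<le> 240 * t + 2 * t^3"
proof -
  have sin_nonpos: "(240 + 42 * t\<^sup>2) * sin t \<le> 240 * t + 2 * t^3" if "sin t \<le> 0"
    using that t by (smt (verit) mult_nonneg_nonpos zero_le_power2 zero_le_power)
  consider "t \<le> pi" | "pi \<le> t" "t \<le> 2 * pi" | "2 * pi \<le> t" "t \<le> 8.2" | "8.2 \<le> t" "t \<le> 3 * pi"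
    | "3 * pi \<le> t" "t \<le> 4 * pi" | "4 * pi \<le> t"
    using pi_approx by linarith
  then show ?thesis
  proof cases
    case 1
    then show ?thesis
      by (rule sin_le_cubic_over_quadratic_le_pi[OF t])
  next
    case 2
    then show ?thesis
      by (intro sin_nonpos sin_le_zero_pi_2pi)
  next
    case 3
    then have "0 \<le> t^3 - 21 * t\<^sup>2 + 120 * t - 120"
      using pi_gt3 by (intro cubic_nonneg_between_4_and_8_2) linarith+
    then show ?thesis
      by (rule sin_le_cubic_over_quadratic_of_cubic_nonneg[OF t])
  next
    case 4
    then show ?thesis
      by (rule sin_le_cubic_over_quadratic_near_3pi)
  next
    case 5
    then have "sin (t - 2 * pi) \<le> 0"
      by (intro sin_le_zero_pi_2pi) auto
    then show ?thesis
      by (intro sin_nonpos) (simp add: sin_diff)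
  next
    case 6
    then have "0 \<le> t^3 - 21 * t\<^sup>2 + 120 * t - 120"
      using pi_gt3 by (intro cubic_nonneg_ge_12) linarith
    then show ?thesis
      by (rule sin_le_cubic_over_quadratic_of_cubic_nonneg[OF t])
  qed
qed

lemma eta_hat_minus: "eta_hat (- s) = eta_hat s"
  by (simp add: eta_hat_def field_simps)

lemma eta_hat_bounds_pos:
  assumes s: "0 < s"
  shows "1 / (1 + 7/40 * s\<^sup>2) \<le> eta_hat s" "eta_hat s \<le> 1 / (1 + s\<^sup>2/20)"
proof -
  have eq: "eta_hat s = 6 * (s - sin s) / s^3"
    using s by (simp add: eta_hat_def)
  have pos: "0 < s^3" "0 < 1 + 7/40 * s\<^sup>2" "0 < 1 + s\<^sup>2/20"
    using s by (auto intro: add_pos_nonneg)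
  have "6 * (s - sin s) * (1 + 7/40 * s\<^sup>2) - s^3 = ((240 * s + 2 * s^3) - (240 + 42 * s\<^sup>2) * sin s) / 40"
    by (simp add: field_simps power2_eq_square power3_eq_cube)
  moreover have "0 \<le> ((240 * s + 2 * s^3) - (240 + 42 * s\<^sup>2) * sin s) / 40"
    using sin_le_cubic_over_quadratic[of s] s by simp
  ultimately have "s^3 \<le> 6 * (s - sin s) * (1 + 7/40 * s\<^sup>2)"
    by linarith
  then show "1 / (1 + 7/40 * s\<^sup>2) \<le> eta_hat s"
    unfolding eq using pos by (simp add: divide_simps mult.commute)
  have "s^3 - 6 * (s - sin s) * (1 + s\<^sup>2/20) = ((120 + 6 * s\<^sup>2) * sin s - (120 * s - 14 * s^3)) / 20"
    by (simp add: field_simps power2_eq_square power3_eq_cube)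
  moreover have "0 \<le> ((120 + 6 * s\<^sup>2) * sin s - (120 * s - 14 * s^3)) / 20"
    using sin_ge_cubic_over_quadratic[of s] s by simp
  ultimately have "6 * (s - sin s) * (1 + s\<^sup>2/20) \<le> s^3"
    by linarith
  then show "eta_hat s \<le> 1 / (1 + s\<^sup>2/20)"
    unfolding eq using pos by (simp add: divide_simps mult.commute)
qed

lemma eta_hat_bounds:
  fixes s :: real
  shows "1 / (1 + 7/40 * s\<^sup>2) \<le> eta_hat s" "eta_hat s \<le> 1 / (1 + s\<^sup>2/20)"
proof -
  consider "s = 0" | "0 < s" | "0 < - s"
    by linarith
  then have "1 / (1 + 7/40 * s\<^sup>2) \<le> eta_hat s \<and> eta_hat s \<le> 1 / (1 + s\<^sup>2/20)"
  proof cases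
    case 1
    then show ?thesis
      by (simp add: eta_hat_def)
  next
    case 2
    then show ?thesis
      using eta_hat_bounds_pos by blast
  next
    case 3
    then show ?thesis
      using eta_hat_bounds_pos[OF 3] by (simp add: eta_hat_minus)
  qed
  then show "1 / (1 + 7/40 * s\<^sup>2) \<le> eta_hat s" "eta_hat s \<le> 1 / (1 + s\<^sup>2/20)"
    by auto
qed

section \<open>Convolution with a probability density\<close>

locale mollification =
  fixes f h :: "real \<Rightarrow> real" and L S T :: real
  assumes lipschitz_f: "L-lipschitz_on UNIV f" and supported_f: "supported_in S f"
    and continuous_h: "continuous_on UNIV h" and supported_h: "supported_in T h"
    and h_nonneg: "\<And>x. 0 \<le> h x" and h_integral: "(h has_integral 1) UNIV"
begin

lemma continuous_f: "continuous_on UNIV f"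
  using lipschitz_f by (rule lipschitz_on_continuous_on)

lemma continuous_conv_integrand: "continuous_on UNIV (\<lambda>y. f y * h (x - y))"
  by (intro continuous_intros continuous_f continuous_on_compose2[OF continuous_h]) auto

lemma supported_conv_integrand: "supported_in S (\<lambda>y. f y * h (x - y))"
  using supported_f by (simp add: supported_in_def)

lemma conv_eq_integral_interval: "conv f h x = integral {-S..S} (\<lambda>y. f y * h (x - y))"
  unfolding conv_def by (rule integral_supported[OF continuous_conv_integrand supported_conv_integrand])

lemma has_integral_conv_swapped: "((\<lambda>y. f (x - y) * h y) has_integral conv f h x) UNIV"
proof -
  define \<rho> where "\<rho> z = f (- z) * h (x + z)" for z
  have "continuous_on UNIV \<rho>"
    unfolding \<rho>_def
    by (intro continuous_intros continuous_on_compose2[OF continuous_h]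
        continuous_on_compose2[OF continuous_f]) auto
  moreover have "supported_in S \<rho>"
    using supported_f by (simp add: supported_in_def \<rho>_def)
  ultimately have "((\<lambda>y. \<rho> (1 * y + - x)) has_integral integral UNIV \<rho> /\<^sub>R 1) UNIV"
    by (rule has_integral_affine_supported) simp
  moreover have "integral UNIV \<rho> = conv f h x"
    using has_integral_reflect_supported[OF continuous_conv_integrand supported_conv_integrand]
    by (simp add: conv_def \<rho>_def[abs_def] integral_unique)
  ultimately show ?thesis
    by (simp add: \<rho>_def)
qed

lemma supported_in_conv: "supported_in (S + T) (conv f h)"
  unfolding supported_in_def
proof (intro allI impI)
  fix x assume x: "S + T < \<bar>x\<bar>"
  have "f y * h (x - y) = 0" for y
  proof (cases "S < \<bar>y\<bar>")
    case False
    then have "T < \<bar>x - y\<bar>"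
      using x by linarith
    then show ?thesis
      using supported_h by (simp add: supported_in_def)
  qed (use supported_f in \<open>simp add: supported_in_def\<close>)
  then have "(\<lambda>y. f y * h (x - y)) = (\<lambda>y. 0)"
    by auto
  then show "conv f h x = 0"
    by (simp add: conv_def)
qed

lemma lipschitz_conv: "L-lipschitz_on UNIV (conv f h)"
proof (rule lipschitz_on_UNIV_realI)
  fix x x'
  have diff: "((\<lambda>y. f (x - y) * h y - f (x' - y) * h y) has_integral conv f h x - conv f h x') UNIV"
    by (intro has_integral_diff has_integral_conv_swapped)
  have bound: "((\<lambda>y. L * \<bar>x - x'\<bar> * h y) has_integral L * \<bar>x - x'\<bar> * 1) UNIV"
    by (intro has_integral_mult_right h_integral)
  have "norm (f (x - y) * h y - f (x' - y) * h y) \<le> L * \<bar>x - x'\<bar> * h y" for y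
  proof -
    have "\<bar>f (x - y) - f (x' - y)\<bar> \<le> L * \<bar>x - x'\<bar>"
      using lipschitz_on_UNIV_realD[OF lipschitz_f, of "x - y" "x' - y"] by simp
    then show ?thesis
      using h_nonneg[of y] by (simp add: abs_mult mult_right_mono flip: left_diff_distrib)
  qed
  from has_integral_norm_le_has_integral[OF diff bound this]
  show "\<bar>conv f h x - conv f h x'\<bar> \<le> L * \<bar>x - x'\<bar>"
    by simp
qed (rule lipschitz_on_nonneg[OF lipschitz_f])

lemma continuous_on_conv: "continuous_on UNIV (conv f h)"
  using lipschitz_conv by (rule lipschitz_on_continuous_on)

lemma conv_dist_le: "\<bar>conv f h x - f x\<bar> \<le> L * T"
proof -
  have diff: "((\<lambda>y. f (x - y) * h y - f x * h y) has_integral conv f h x - f x * 1) UNIV"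
    by (intro has_integral_diff has_integral_conv_swapped has_integral_mult_right h_integral)
  have bound: "((\<lambda>y. L * T * h y) has_integral L * T * 1) UNIV"
    by (intro has_integral_mult_right h_integral)
  have "norm (f (x - y) * h y - f x * h y) \<le> L * T * h y" for y
  proof (cases "T < \<bar>y\<bar>")
    case False
    have "\<bar>f (x - y) - f x\<bar> \<le> L * \<bar>y\<bar>"
      using lipschitz_on_UNIV_realD[OF lipschitz_f, of "x - y" x] by simp
    also have "\<dots> \<le> L * T"
      using False lipschitz_on_nonneg[OF lipschitz_f] by (intro mult_left_mono) auto
    finally show ?thesis
      using h_nonneg[of y] by (simp add: abs_mult mult_right_mono flip: left_diff_distrib)
  qed (use supported_h in \<open>simp add: supported_in_def\<close>)
  from has_integral_norm_le_has_integral[OF diff bound this]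
  show ?thesis
    by simp
qed

lemma fourier_conv: "fourier (conv f h) k = fourier f k * fourier h k"
proof -
  define R where "R = S + T"
  define F where "F x y = fourier_kernel k x * complex_of_real (f y * h (x - y))" for x y
  have inner: "fourier_kernel k x * complex_of_real (conv f h x) = integral {-S..S} (F x)" for x
  proof -
    have "(\<lambda>y. f y * h (x - y)) integrable_on {-S..S}"
      by (intro integrable_continuous_interval continuous_on_subset[OF continuous_conv_integrand]) auto
    then have "integral {-S..S} (\<lambda>y. complex_of_real (f y * h (x - y))) = complex_of_real (conv f h x)"
      unfolding conv_eq_integral_interval by (rule integral_unique[OF has_integral_of_real[OF integrable_integral]])
    then show ?thesis
      unfolding F_def by (simp only: integral_mult_right)
  qed
  have swap: "integral {-R..R} (\<lambda>x. integral {-S..S} (F x))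
      = integral {-S..S} (\<lambda>y. integral {-R..R} (\<lambda>x. F x y))"
  proof -
    have "continuous_on UNIV (\<lambda>(x, y). F x y)"
      unfolding F_def case_prod_unfold
      by (intro continuous_intros continuous_on_compose2[OF continuous_on_fourier_kernel]
          continuous_on_compose2[OF continuous_f] continuous_on_compose2[OF continuous_h]) auto
    from continuous_on_subset[OF this]
    show ?thesis
      using integral_swap_continuous[of "-R" "-S" R S F] by (simp add: cbox_interval)
  qed
  have translate: "integral {-R..R} (\<lambda>x. F x y) = fourier_kernel k y * complex_of_real (f y) * fourier h k"
    if "y \<in> {-S..S}" for y
  proof -
    have "F x y = complex_of_real (f y) * (fourier_kernel k x * complex_of_real (h (x - y)))" for x
      by (simp add: F_def)
    then show ?thesis
      using integral_interval_fourier_translate[OF continuous_h supported_h, of y S k] that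
      by (simp add: R_def integral_mult_right abs_le_iff)
  qed
  have "fourier (conv f h) k = integral {-R..R} (\<lambda>x. fourier_kernel k x * complex_of_real (conv f h x))"
    unfolding R_def by (rule fourier_eq_integral_interval[OF continuous_on_conv supported_in_conv])
  also have "\<dots> = integral {-S..S} (\<lambda>y. fourier_kernel k y * complex_of_real (f y) * fourier h k)"
    unfolding inner swap by (intro integral_cong translate)
  also have "\<dots> = fourier f k * fourier h k"
    using fourier_eq_integral_interval[OF continuous_f supported_f] by (simp add: integral_mult_left)
  finally show ?thesis .
qed

end

section \<open>The limit function g\<close>

lemma tendsto_suminf_tail:
  fixes f :: "nat \<Rightarrow> 'a::real_normed_vector"
  assumes "summable f"
  shows "(\<lambda>n. \<Sum>i. f (i + n)) \<longlonglongrightarrow> 0"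
proof -
  have "(\<lambda>n. suminf f - sum f {..<n}) \<longlonglongrightarrow> suminf f - suminf f"
    by (intro tendsto_diff tendsto_const summable_LIMSEQ assms)
  moreover have "(\<Sum>i. f (i + n)) = suminf f - sum f {..<n}" for n
    using suminf_split_initial_segment[OF assms, of n] by simp
  ultimately show ?thesis
    by simp
qed

lemma exp_minus_A_partial: "exp (- A_partial a N s) = (\<Prod>i<N. 1 / (1 + (a i)\<^sup>2 * s\<^sup>2))"
proof -
  have "exp (- A_partial a N s) = (\<Prod>i<N. exp (- ln (1 + (a i)\<^sup>2 * s\<^sup>2)))"
    by (simp add: A_partial_def exp_sum flip: sum_negf)
  also have "\<dots> = (\<Prod>i<N. 1 / (1 + (a i)\<^sup>2 * s\<^sup>2))"
    by (intro prod.cong refl) (simp add: exp_minus add_pos_nonneg inverse_eq_divide)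
  finally show ?thesis .
qed

lemma prod_eta_hat_bounds:
  shows "exp (- A_partial a (Suc n) (sqrt (7/40) * k)) \<le> (\<Prod>i\<le>n. eta_hat (a i * k))"
    and "(\<Prod>i\<le>n. eta_hat (a i * k)) \<le> exp (- A_partial a (Suc n) (sqrt (1/20) * k))"
proof -
  have exp_A: "exp (- A_partial a (Suc n) (sqrt c * k)) = (\<Prod>i\<le>n. 1 / (1 + c * (a i * k)\<^sup>2))"
    if "0 \<le> c" for c
    using that by (simp add: exp_minus_A_partial lessThan_Suc_atMost power_mult_distrib mult_ac)
  have pos: "0 < 1 / (1 + c * s\<^sup>2)" if "0 \<le> c" for c s :: real
    using that by (simp add: add_pos_nonneg)
  show "exp (- A_partial a (Suc n) (sqrt (7/40) * k)) \<le> (\<Prod>i\<le>n. eta_hat (a i * k))"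
    unfolding exp_A[of "7/40", simplified]
    by (intro prod_mono conjI) (use pos[of "7/40"] eta_hat_bounds(1) in auto)
  have "(\<Prod>i\<le>n. eta_hat (a i * k)) \<le> (\<Prod>i\<le>n. 1 / (1 + (a i * k)\<^sup>2 / 20))"
  proof (intro prod_mono conjI)
    fix i
    show "0 \<le> eta_hat (a i * k)"
      using pos[of "7/40" "a i * k"] eta_hat_bounds(1)[of "a i * k"] by linarith
    show "eta_hat (a i * k) \<le> 1 / (1 + (a i * k)\<^sup>2 / 20)"
      by (rule eta_hat_bounds(2))
  qed
  then show "(\<Prod>i\<le>n. eta_hat (a i * k)) \<le> exp (- A_partial a (Suc n) (sqrt (1/20) * k))"
    using exp_A[of "1/20"] by simp
qed

context positive_summable
begin

text \<open>Convolution preserves the Lipschitz constant of the first factor eta_(a 0).\<close>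

definition lip :: real where
  "lip = 3 / (a 0)\<^sup>2"

lemma mollification_gseq:
  assumes "lip-lipschitz_on UNIV (gseq a n)" "supported_in (sum a {..n}) (gseq a n)"
  shows "mollification (gseq a n) (eta_scaled (a (Suc n))) lip (sum a {..n}) (a (Suc n))"
  using assms pos continuous_on_eta_scaled supported_in_eta_scaled eta_scaled_nonneg
    has_integral_eta_scaled
  by unfold_locales auto

lemma lipschitz_supported_gseq:
  "lip-lipschitz_on UNIV (gseq a n) \<and> supported_in (sum a {..n}) (gseq a n)"
proof (induction n)
  case 0
  show ?case
    using lipschitz_eta_scaled[OF pos] supported_in_eta_scaled[OF pos] by (simp add: lip_def)
next
  case (Suc n)
  interpret mollification "gseq a n" "eta_scaled (a (Suc n))" lip "sum a {..n}" "a (Suc n)"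
    using Suc.IH by (intro mollification_gseq) auto
  show ?case
    using lipschitz_conv supported_in_conv by (simp add: add.commute)
qed

interpretation gseq: mollification "gseq a n" "eta_scaled (a (Suc n))" lip "sum a {..n}" "a (Suc n)"
  for n
  using lipschitz_supported_gseq by (intro mollification_gseq) auto

lemma fourier_gseq: "fourier (gseq a n) k = complex_of_real (\<Prod>i\<le>n. eta_hat (a i * k))"
proof (induction n)
  case 0
  show ?case
    using fourier_eta_scaled[OF pos] by simp
next
  case (Suc n)
  then show ?case
    using gseq.fourier_conv[of n k] fourier_eta_scaled[OF pos[of "Suc n"], of k]
    by (simp add: mult.commute)
qed

lemma partial_sum_le_suminf: "sum a {..n} \<le> suminf a"
  using sum_le_suminf[OF summable] pos by (simp add: less_imp_le)

lemma
  shows tendsto_gseq: "(\<lambda>n. gseq a n x) \<longlonglongrightarrow> g_lim a x"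
    and g_lim_dist_le: "\<bar>g_lim a x - gseq a n x\<bar> \<le> lip * (\<Sum>i. a (i + Suc n))"
proof -
  define d where "d i = gseq a (Suc i) x - gseq a i x" for i
  have d_le: "\<bar>d i\<bar> \<le> lip * a (Suc i)" for i
    using gseq.conv_dist_le[of i x] by (simp add: d_def)
  have summable_bound: "summable (\<lambda>i. lip * a (Suc i))"
    using summable by (intro summable_mult) (simp add: summable_Suc_iff)
  have "summable d"
    by (rule summable_comparison_test[OF _ summable_bound]) (use d_le in auto)
  have telescope: "gseq a n x = gseq a 0 x + sum d {..<n}" for n
  proof -
    have "sum d {..<n} = gseq a n x - gseq a 0 x"
      unfolding d_def by (rule sum_lessThan_telescope)
    then show ?thesis
      by simp
  qed
  then have "(\<lambda>n. gseq a n x) = (\<lambda>n. gseq a 0 x + sum d {..<n})"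
    by (rule ext)
  have "(\<lambda>n. gseq a n x) \<longlonglongrightarrow> gseq a 0 x + suminf d"
    unfolding \<open>(\<lambda>n. gseq a n x) = _\<close> by (intro tendsto_add tendsto_const summable_LIMSEQ \<open>summable d\<close>)
  moreover from this have g: "g_lim a x = gseq a 0 x + suminf d"
    unfolding g_lim_def by (rule limI)
  ultimately show "(\<lambda>n. gseq a n x) \<longlonglongrightarrow> g_lim a x"
    by simp
  have "g_lim a x - gseq a n x = (\<Sum>i. d (i + n))"
    using g telescope[of n] suminf_split_initial_segment[OF \<open>summable d\<close>, of n] by simp
  also have "\<bar>\<dots>\<bar> \<le> (\<Sum>i. lip * a (Suc (i + n)))"
    using norm_suminf_le[of "\<lambda>i. d (i + n)" "\<lambda>i. lip * a (Suc (i + n))"]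
      summable_ignore_initial_segment[OF summable_bound, of n] d_le
    by simp
  also have "\<dots> = lip * (\<Sum>i. a (i + Suc n))"
    using suminf_mult[OF summable_ignore_initial_segment[OF summable, of "Suc n"], of lip] by simp
  finally show "\<bar>g_lim a x - gseq a n x\<bar> \<le> lip * (\<Sum>i. a (i + Suc n))" .
qed

lemma supported_in_g_lim: "supported_in (suminf a) (g_lim a)"
  unfolding supported_in_def
proof (intro allI impI)
  fix x assume "suminf a < \<bar>x\<bar>"
  then have "gseq a n x = 0" for n
    using lipschitz_supported_gseq[of n] partial_sum_le_suminf[of n] by (auto simp: supported_in_def)
  then show "g_lim a x = 0"
    using tendsto_gseq[of x] by (simp add: LIMSEQ_const_iff)
qed

lemma lipschitz_g_lim: "lip-lipschitz_on UNIV (g_lim a)"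
proof (rule lipschitz_on_UNIV_realI)
  fix x y
  have "(\<lambda>n. \<bar>gseq a n x - gseq a n y\<bar>) \<longlonglongrightarrow> \<bar>g_lim a x - g_lim a y\<bar>"
    by (intro tendsto_rabs tendsto_diff tendsto_gseq)
  moreover have "\<bar>gseq a n x - gseq a n y\<bar> \<le> lip * \<bar>x - y\<bar>" for n
    using lipschitz_supported_gseq[of n] by (simp add: lipschitz_on_UNIV_realD)
  ultimately show "\<bar>g_lim a x - g_lim a y\<bar> \<le> lip * \<bar>x - y\<bar>"
    by (intro LIMSEQ_le_const2) auto
qed (use pos[of 0] in \<open>simp add: lip_def\<close>)

lemma continuous_on_g_lim: "continuous_on UNIV (g_lim a)"
  using lipschitz_g_lim by (rule lipschitz_on_continuous_on)

lemma tendsto_fourier_gseq: "(\<lambda>n. fourier (gseq a n) k) \<longlonglongrightarrow> fourier (g_lim a) k"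
proof -
  have "0 \<le> suminf a"
    using partial_sum_le_suminf[of 0] pos[of 0] by simp
  have dist_le: "norm (fourier (g_lim a) k - fourier (gseq a n) k) \<le> lip * (\<Sum>i. a (i + Suc n)) * (2 * suminf a)"
    for n
  proof (rule norm_fourier_diff_le[OF continuous_on_g_lim supported_in_g_lim])
    show "continuous_on UNIV (gseq a n)" "supported_in (suminf a) (gseq a n)"
      using lipschitz_supported_gseq[of n] partial_sum_le_suminf[of n]
      by (auto intro: lipschitz_on_continuous_on supported_in_mono)
  qed (use g_lim_dist_le \<open>0 \<le> suminf a\<close> in auto)
  have "(\<lambda>n. \<Sum>i. a (i + Suc n)) \<longlonglongrightarrow> 0"
    using LIMSEQ_Suc[OF tendsto_suminf_tail[OF summable]] by simp
  from tendsto_mult_right[OF tendsto_mult_left[OF this, where c=lip], where c="2 * suminf a"]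
  have "(\<lambda>n. lip * (\<Sum>i. a (i + Suc n)) * (2 * suminf a)) \<longlonglongrightarrow> 0"
    by simp
  then have "(\<lambda>n. fourier (g_lim a) k - fourier (gseq a n) k) \<longlonglongrightarrow> 0"
    by (rule Lim_null_comparison[rotated]) (use dist_le in auto)
  from tendsto_diff[OF tendsto_const this, of "fourier (g_lim a) k"]
  show ?thesis
    by simp
qed

lemma fourier_g_lim_bounds:
  "Im (fourier (g_lim a) k) = 0
   \<and> exp (- A_fun a (sqrt (7/40) * k)) \<le> Re (fourier (g_lim a) k)
   \<and> Re (fourier (g_lim a) k) \<le> exp (- A_fun a (sqrt (1/20) * k))"
proof -
  define P where "P n = (\<Prod>i\<le>n. eta_hat (a i * k))" for n
  have P: "(\<lambda>n. complex_of_real (P n)) \<longlonglongrightarrow> fourier (g_lim a) k"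
    using tendsto_fourier_gseq[of k] by (simp add: P_def fourier_gseq)
  have "(\<lambda>n. Im (complex_of_real (P n))) \<longlonglongrightarrow> Im (fourier (g_lim a) k)"
    by (rule tendsto_Im[OF P])
  then have "Im (fourier (g_lim a) k) = 0"
    by (simp add: LIMSEQ_const_iff)
  moreover have Re: "P \<longlonglongrightarrow> Re (fourier (g_lim a) k)"
    using tendsto_Re[OF P] by simp
  have exp_A: "(\<lambda>n. exp (- A_partial a (Suc n) s)) \<longlonglongrightarrow> exp (- A_fun a s)" for s
    by (intro tendsto_exp tendsto_minus LIMSEQ_Suc[OF A_partial_tendsto])
  have "exp (- A_fun a (sqrt (7/40) * k)) \<le> Re (fourier (g_lim a) k)"
    by (intro LIMSEQ_le[OF exp_A Re]) (simp add: P_def prod_eta_hat_bounds)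
  moreover have "Re (fourier (g_lim a) k) \<le> exp (- A_fun a (sqrt (1/20) * k))"
    by (intro LIMSEQ_le[OF Re exp_A]) (simp add: P_def prod_eta_hat_bounds)
  ultimately show ?thesis
    by simp
qed

end

theorem mainTheorem5:
  fixes a :: "nat \<Rightarrow> real"
  assumes pos: "\<And>n. a n > 0"
    and summ: "summable a"
  shows "(\<forall>K. compact K \<longrightarrow> uniform_limit K (A_partial a) (A_fun a) sequentially)
    \<and> continuous_on UNIV (A_fun a)
    \<and> (\<forall>k. 0 \<le> A_fun a k \<and> A_fun a k \<le> suminf a * \<bar>k\<bar>)
    \<and> (\<forall>k. A_fun a (- k) = A_fun a k)
    \<and> strict_mono_on {0..} (A_fun a)
    \<and> filterlim (A_fun a) at_top at_top
    \<and> ((\<lambda>k. A_fun a k / \<bar>k\<bar>) \<longlongrightarrow> 0) at_top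
    \<and> ((\<lambda>k. A_fun a k / \<bar>k\<bar>) \<longlongrightarrow> 0) (at 0)
    \<and> ((\<lambda>k. A_fun a k / k\<^sup>2) has_integral (pi * suminf a)) {0<..}
    \<and> (\<forall>k. Im (fourier (g_lim a) k) = 0
         \<and> exp (- A_fun a (sqrt (7/40) * k)) \<le> Re (fourier (g_lim a) k)
         \<and> Re (fourier (g_lim a) k) \<le> exp (- A_fun a (sqrt (1/20) * k)))"
proof -
  interpret positive_summable a
    using pos summ by unfold_locales
  show ?thesis
    using uniform_limit_A_partial continuous_on_A_fun A_fun_nonneg A_fun_le_abs A_fun_minus
      strict_mono_on_A_fun filterlim_A_fun_at_top A_fun_over_abs_tendsto_at_top
      A_fun_over_abs_tendsto_at_0 A_fun_over_square_has_integral fourier_g_lim_bounds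
    by blast
qed

end
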